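(* Let $0<q<1$, $N$ a positive integer, $n\in\{0,1,\dots,N\}$, and $\gamma\in\mathbb{C}$ with $\gamma q,\gamma q^2,\gamma q^3\notin\{q^{-j}:j\in\mathbb{Z}_{\ge0}\}$. Then $${}_4\phi_3\!\left(\begin{matrix}q^{-2n-1},q^{-2(N-n)},q^{-x},-\gamma q^{x+1}\\ q^{-N},-q^{-N},\gamma q\end{matrix};q,q\right)=\frac{q^{-x}-\gamma q^{x+1}}{1-\gamma q}\;{}_4\phi_3\!\left(\begin{matrix}q^{-2n},q^{2n-2N+1},q^{-2x},\gamma^2q^{2x+2}\\ q^{-2N},\gamma q^2,\gamma q^3\end{matrix};q^2,q^2\right)$$ holds for all $x\in\mathbb{C}$ if $2n+1\le N$, and holds for $x\in\{0,1,\dots,N\}$ if $2n+1>N$.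
   Context: $(x;q)_k=\prod_{j=0}^{k-1}(1-xq^j)$. A terminating ${}_4\phi_3\!\left(\begin{matrix}a_1,\dots,a_4\\ b_1,b_2,b_3\end{matrix};p,p\right)$ (base $p$, here $p=q$ or $p=q^2$) means $\sum_{k=0}^K\frac{(a_1,\dots,a_4;p)_k}{(b_1,b_2,b_3,p;p)_k}p^k$, where $K$ is the smallest nonnegative integer such that some numerator parameter $a_i$ equals $p^{-K}$ (the sum is truncated at the first numerator parameter that causes termination). *)

theory Defs
  imports "HOL-Analysis.Analysis"
begin

definition qpoch :: "complex \<Rightarrow> complex \<Rightarrow> nat \<Rightarrow> complex" where
  "qpoch x p k = (\<Prod>j<k. (1 - x * p ^ j))"

definition qpw :: "real \<Rightarrow> complex \<Rightarrow> complex" where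
  "qpw q s = complex_of_real q powr s"

text \<open>Terminating 4phi3 with base p and argument p: the sum is truncated at the
  smallest K such that some numerator parameter equals p^(-K).\<close>
definition phi43_term_index :: "complex \<Rightarrow> complex \<Rightarrow> complex \<Rightarrow> complex \<Rightarrow> complex \<Rightarrow> nat" where
  "phi43_term_index a1 a2 a3 a4 p =
     (LEAST K. \<exists>a\<in>{a1, a2, a3, a4}. a = inverse (p ^ K))"

definition phi43 :: "complex \<Rightarrow> complex \<Rightarrow> complex \<Rightarrow> complex \<Rightarrow> complex \<Rightarrow> complex \<Rightarrow> complex
                      \<Rightarrow> complex \<Rightarrow> complex" where
  "phi43 a1 a2 a3 a4 b1 b2 b3 p =
     (\<Sum>k\<le>phi43_term_index a1 a2 a3 a4 p.
        (qpoch a1 p k * qpoch a2 p k * qpoch a3 p k * qpoch a4 p k)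
        / (qpoch b1 p k * qpoch b2 p k * qpoch b3 p k * qpoch p p k) * p ^ k)"

end

theory Submission
  imports Defs "HOL-Computational_Algebra.Polynomial"
begin

text \<open>Write u = q^x. The left-hand side is a q-Racah polynomial in u, so it solves the
  second-order q-Racah difference equation in u; the right-hand side sum is a q-Racah polynomial
  in base q^2 evaluated at u^2, and the prefactor q^(-x) - \<gamma> q^(x+1) gauges its base q^2
  equation into the very same base q equation. Both sides equal 1 at u = 1, so the recurrence
  forces them to agree at u = q^m for m = 0, ..., N. If 2n + 1 \<le> N both sides are polynomials of
  degree at most 2n + 1 in q^(-x) - \<gamma> q^(x+1), hence they agree for all x. The argument needs
  \<gamma> q^j \<noteq> 1 and \<gamma> q^j \<noteq> -1 for small j; the remaining admissible \<gamma> are reached by continuity.\<close>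

lemma qpoch_0 [simp]: "qpoch x p 0 = 1"
  by (simp add: qpoch_def)

lemma qpoch_Suc: "qpoch x p (Suc k) = qpoch x p k * (1 - x * p ^ k)"
  by (simp add: qpoch_def)

lemma qpoch_Suc_left: "qpoch x p (Suc k) = (1 - x) * qpoch (x * p) p k"
proof (induction k)
  case (Suc k)
  have "qpoch x p (Suc (Suc k)) = (1 - x) * qpoch (x * p) p k * (1 - x * p ^ Suc k)"
    by (subst qpoch_Suc) (simp add: Suc.IH)
  then show ?case
    by (simp add: qpoch_Suc algebra_simps)
qed (simp add: qpoch_def)

lemma qpoch_eq_0:
  assumes "x * p ^ K = 1" "K < k"
  shows "qpoch x p k = 0"
  unfolding qpoch_def using assms by (intro prod_zero) auto

lemma qpoch_nonzero: "(\<And>j. j < k \<Longrightarrow> x * p ^ j \<noteq> 1) \<Longrightarrow> qpoch x p k \<noteq> 0"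
  unfolding qpoch_def by (auto simp: prod_zero_iff)

lemma tendsto_qpoch [tendsto_intros]:
  "(f \<longlongrightarrow> a) F \<Longrightarrow> ((\<lambda>x. qpoch (f x) p k) \<longlongrightarrow> qpoch a p k) F"
  unfolding qpoch_def by (intro tendsto_intros)

definition qdiff :: "complex \<Rightarrow> (complex \<Rightarrow> complex) \<Rightarrow> (complex \<Rightarrow> complex)
    \<Rightarrow> (complex \<Rightarrow> complex) \<Rightarrow> complex \<Rightarrow> complex" where
  "qdiff p B D f u = B u * f (p * u) - (B u + D u) * f u + D u * f (u / p)"

definition qracah_basis :: "complex \<Rightarrow> complex \<Rightarrow> complex \<Rightarrow> nat \<Rightarrow> complex" where
  "qracah_basis p C w k = qpoch (inverse w) p k * qpoch (C * p * w) p k"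

text \<open>With u = p^x and (a, b, g, d) = (\<alpha>, \<beta>, \<gamma>, \<delta>), qracah_B and qracah_D are the
  coefficients B(x) and D(x) of the q-Racah difference equation (Koekoek, Lesky, Swarttouw,
  (14.2.5)) multiplied by the common denominator qracah_W.\<close>

definition qracah_B :: "complex \<Rightarrow> complex \<Rightarrow> complex \<Rightarrow> complex \<Rightarrow> complex \<Rightarrow> complex \<Rightarrow> complex" where
  "qracah_B p a b g d u =
     (1 - a*p*u) * (1 - b*d*p*u) * (1 - g*p*u) * (1 - g*d*u^2) * (1 - g*d*p*u)"

definition qracah_D :: "complex \<Rightarrow> complex \<Rightarrow> complex \<Rightarrow> complex \<Rightarrow> complex \<Rightarrow> complex \<Rightarrow> complex" where
  "qracah_D p a b g d u = p * (1 - u) * (1 - d*u) * (b - g*u) * (a - g*d*u) * (1 - g*d*p^2*u^2)"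

definition qracah_W :: "complex \<Rightarrow> complex \<Rightarrow> complex \<Rightarrow> complex" where
  "qracah_W p C u = (1 - C*u^2) * (1 - C*p*u^2) * (1 - C*p^2*u^2)"

definition qracah_eigenvalue :: "complex \<Rightarrow> complex \<Rightarrow> complex \<Rightarrow> nat \<Rightarrow> complex" where
  "qracah_eigenvalue p a b k = (inverse (p ^ k) - 1) * (1 - a*b*p^Suc k)"

definition qracah_offdiag ::
    "complex \<Rightarrow> complex \<Rightarrow> complex \<Rightarrow> complex \<Rightarrow> complex \<Rightarrow> nat \<Rightarrow> complex" where
  "qracah_offdiag p a b g d k =
     - inverse (p ^ k) * (1 - p^k) * (1 - a*p^k) * (1 - b*d*p^k) * (1 - g*p^k)"

lemma qracah_basis_Suc_shifts:
  fixes p u C :: complex and j :: nat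
  assumes p: "p \<noteq> 0" and u: "u \<noteq> 0"
  defines "P \<equiv> qpoch (inverse u) p j" and "Q \<equiv> qpoch (C*p*u) p j" and "U \<equiv> p^j"
  shows "qracah_basis p C (p*u) (Suc j) * (1 - C*p*u)
           = (1 - inverse p * inverse u) * P * Q * (1 - C*p*u*U) * (1 - C*p*u*(p*U))"
    and "qracah_basis p C (u/p) (Suc j) * (1 - inverse u)
           = P * (1 - inverse u*U) * (1 - inverse u*(p*U)) * (1 - C*u) * Q"
    and "qracah_basis p C u (Suc j) = P * (1 - inverse u*U) * Q * (1 - C*p*u*U)"
proof -
  have "qpoch (C*p*u) p (Suc (Suc j)) = (1 - C*p*u) * qpoch (C*p*(p*u)) p (Suc j)"
    by (simp add: qpoch_Suc_left mult_ac)
  moreover have "qpoch (C*p*u) p (Suc (Suc j)) = Q * (1 - C*p*u*U) * (1 - C*p*u*(p*U))"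
    by (simp add: Q_def U_def qpoch_Suc mult_ac)
  moreover have "qpoch (inverse (p*u)) p (Suc j) = (1 - inverse p * inverse u) * P"
    using p u by (simp add: P_def qpoch_Suc_left field_simps)
  ultimately show "qracah_basis p C (p*u) (Suc j) * (1 - C*p*u)
      = (1 - inverse p * inverse u) * P * Q * (1 - C*p*u*U) * (1 - C*p*u*(p*U))"
    by (simp add: qracah_basis_def mult_ac)
  have "qpoch (inverse u) p (Suc (Suc j)) = (1 - inverse u) * qpoch (inverse (u/p)) p (Suc j)"
    using p u by (simp add: qpoch_Suc_left field_simps)
  moreover have "qpoch (inverse u) p (Suc (Suc j)) = P * (1 - inverse u*U) * (1 - inverse u*(p*U))"
    by (simp add: P_def U_def qpoch_Suc)
  moreover have "qpoch (C*p*(u/p)) p (Suc j) = (1 - C*u) * Q"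
    using p by (simp add: Q_def qpoch_Suc_left field_simps)
  ultimately show "qracah_basis p C (u/p) (Suc j) * (1 - inverse u)
      = P * (1 - inverse u*U) * (1 - inverse u*(p*U)) * (1 - C*u) * Q"
    by (simp add: qracah_basis_def mult_ac)
  show "qracah_basis p C u (Suc j) = P * (1 - inverse u*U) * Q * (1 - C*p*u*U)"
    by (simp add: qracah_basis_def P_def Q_def U_def qpoch_Suc mult_ac)
qed

lemma qdiff_qracah_basis:
  assumes p: "p \<noteq> 0" and u: "u \<noteq> 0"
  shows "qdiff p (qracah_B p a b g d) (qracah_D p a b g d) (\<lambda>w. qracah_basis p (g*d) w k) u
       = qracah_W p (g*d) u * (qracah_eigenvalue p a b k * qracah_basis p (g*d) u k
                               + qracah_offdiag p a b g d k * qracah_basis p (g*d) u (k - 1))"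
proof (cases k)
  case 0
  then show ?thesis
    by (simp add: qdiff_def qracah_basis_def qracah_eigenvalue_def qracah_offdiag_def)
next
  case (Suc j)
  define C where "C = g*d"
  define P where "P = qpoch (inverse u) p j"
  define Q where "Q = qpoch (C*p*u) p j"
  define U where "U = p^j"
  note shifts = qracah_basis_Suc_shifts [OF p u, where j = j and C = C, folded P_def Q_def U_def]
  have below: "qracah_basis p C u j = P * Q"
    by (simp add: qracah_basis_def P_def Q_def)
  \<comment> \<open>The factors 1 - C p u of B and 1 - u of D cancel the denominators
    hidden in the shifted basis functions; what remains is a polynomial identity.\<close>
  have identity: "((1-a*p*u)*(1-b*d*p*u)*(1-g*p*u)*(1-C*u^2))
        * ((1 - ip*iu)*P*Q*(1 - C*p*u*U)*(1 - C*p*u*(p*U)))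
      - ((1-a*p*u)*(1-b*d*p*u)*(1-g*p*u)*(1-C*u^2)*(1-C*p*u)
         + p*(1-u)*(1-d*u)*(b-g*u)*(a-C*u)*(1-C*p^2*u^2)) * (P*(1-iu*U)*Q*(1-C*p*u*U))
      - u*p*(1-d*u)*(b-g*u)*(a-C*u)*(1-C*p^2*u^2) * (P*(1-iu*U)*(1-iu*(p*U))*(1-C*u)*Q)
      = ((1-C*u^2)*(1-C*p*u^2)*(1-C*p^2*u^2))
        * ((iV - 1)*(1 - a*b*(p*(p*U))) * (P*(1-iu*U)*Q*(1-C*p*u*U))
           - iV*(1-p*U)*(1-a*(p*U))*(1-b*d*(p*U))*(1-g*(p*U)) * (P*Q))"
    if "u*iu = 1" "p*ip = 1" "p*U*iV = 1" "C = g*d" for iu ip iV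
    using that by algebra
  define B' where "B' = (1-a*p*u)*(1-b*d*p*u)*(1-g*p*u)*(1-C*u^2)"
  define D' where "D' = u*p*(1-d*u)*(b-g*u)*(a-C*u)*(1-C*p^2*u^2)"
  have B: "qracah_B p a b g d u = B' * (1 - C*p*u)"
    by (simp add: qracah_B_def B'_def C_def)
  have D: "qracah_D p a b g d u = - D' * (1 - inverse u)"
    using u by (simp add: qracah_D_def D'_def C_def field_simps)
  have "qdiff p (qracah_B p a b g d) (qracah_D p a b g d) (\<lambda>w. qracah_basis p C w (Suc j)) u
      = B' * (qracah_basis p C (p*u) (Suc j) * (1 - C*p*u))
        - (B' * (1 - C*p*u) + qracah_D p a b g d u) * qracah_basis p C u (Suc j)
        - D' * (qracah_basis p C (u/p) (Suc j) * (1 - inverse u))"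
    unfolding qdiff_def B D by (simp add: algebra_simps)
  also have "\<dots> = B' * ((1 - inverse p * inverse u)*P*Q*(1 - C*p*u*U)*(1 - C*p*u*(p*U)))
      - (B' * (1-C*p*u) + p*(1-u)*(1-d*u)*(b-g*u)*(a-C*u)*(1-C*p^2*u^2))
        * (P*(1-inverse u*U)*Q*(1-C*p*u*U))
      - D' * (P*(1-inverse u*U)*(1-inverse u*(p*U))*(1-C*u)*Q)"
    unfolding shifts by (simp add: qracah_D_def C_def)
  also have "\<dots> = qracah_W p C u
      * ((inverse (p*U) - 1)*(1 - a*b*(p*(p*U))) * (P*(1-inverse u*U)*Q*(1-C*p*u*U))
         - inverse (p*U)*(1-p*U)*(1-a*(p*U))*(1-b*d*(p*U))*(1-g*(p*U)) * (P*Q))"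
    unfolding qracah_W_def B'_def D'_def using p u by (intro identity) (simp_all add: U_def C_def field_simps)
  also have "\<dots> = qracah_W p C u * (qracah_eigenvalue p a b k * qracah_basis p C u k
                                   + qracah_offdiag p a b g d k * qracah_basis p C u (k - 1))"
    by (simp add: Suc shifts(3) below qracah_eigenvalue_def qracah_offdiag_def U_def mult_ac)
  finally show ?thesis
    by (simp add: Suc C_def)
qed

lemma qdiff_sum:
  "qdiff p B D (\<lambda>w. \<Sum>k\<in>A. c k * f k w) u = (\<Sum>k\<in>A. c k * qdiff p B D (f k) u)"
  by (simp add: qdiff_def sum_distrib_left sum_subtractf sum.distrib algebra_simps)

definition qracah_sum :: "(nat \<Rightarrow> complex) \<Rightarrow> complex \<Rightarrow> complex \<Rightarrow> nat \<Rightarrow> complex \<Rightarrow> complex" where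
  "qracah_sum c p C M w = (\<Sum>k\<le>M. c k * qracah_basis p C w k)"

lemma qracah_sum_at_1: "qracah_sum c p C M 1 = c 0"
proof -
  have "qracah_sum c p C M 1 = c 0 * qracah_basis p C 1 0 + (\<Sum>k<M. c (Suc k) * qracah_basis p C 1 (Suc k))"
    unfolding qracah_sum_def by (rule sum.atMost_shift)
  also have "(\<Sum>k<M. c (Suc k) * qracah_basis p C 1 (Suc k)) = 0"
    by (rule sum.neutral) (simp add: qracah_basis_def qpoch_Suc_left)
  finally show ?thesis
    by (simp add: qracah_basis_def)
qed

text \<open>The off-diagonal parts of consecutive terms telescope away.\<close>

lemma qdiff_qracah_sum:
  assumes p: "p \<noteq> 0" and u: "u \<noteq> 0"
    and recurrence: "\<And>k. k < M \<Longrightarrow>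
      c (Suc k) * qracah_offdiag p a b g d (Suc k) = - (qracah_eigenvalue p a b k - E) * c k"
    and top: "qracah_eigenvalue p a b M = E"
  shows "qdiff p (qracah_B p a b g d) (qracah_D p a b g d) (qracah_sum c p (g*d) M) u
       = qracah_W p (g*d) u * E * qracah_sum c p (g*d) M u"
proof -
  define f where "f k = qracah_basis p (g*d) u k" for k
  define ev where "ev k = qracah_eigenvalue p a b k" for k
  define off where "off k = qracah_offdiag p a b g d k" for k
  have "qracah_sum c p (g*d) M = (\<lambda>w. \<Sum>k\<le>M. c k * qracah_basis p (g*d) w k)"
    by (simp add: fun_eq_iff qracah_sum_def)
  then have "qdiff p (qracah_B p a b g d) (qracah_D p a b g d) (qracah_sum c p (g*d) M) u
      = (\<Sum>k\<le>M. c k * qdiff p (qracah_B p a b g d) (qracah_D p a b g d)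
                                (\<lambda>w. qracah_basis p (g*d) w k) u)"
    by (simp add: qdiff_sum)
  also have "\<dots> = (\<Sum>k\<le>M. c k * (qracah_W p (g*d) u * (ev k * f k + off k * f (k - 1))))"
    by (simp add: qdiff_qracah_basis [OF p u] f_def ev_def off_def)
  also have "\<dots> = qracah_W p (g*d) u * ((\<Sum>k\<le>M. c k * ev k * f k) + (\<Sum>k\<le>M. c k * off k * f (k - 1)))"
    by (simp add: sum_distrib_left sum.distrib algebra_simps)
  also have "(\<Sum>k\<le>M. c k * off k * f (k - 1)) = (\<Sum>k<M. c (Suc k) * off (Suc k) * f k)"
    by (subst sum.atMost_shift) (simp add: off_def qracah_offdiag_def)
  also have "\<dots> = (\<Sum>k<M. - (ev k - E) * c k * f k)"
    by (rule sum.cong) (simp_all add: recurrence ev_def off_def)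
  also have "(\<Sum>k\<le>M. c k * ev k * f k) = (\<Sum>k<M. c k * ev k * f k) + c M * E * f M"
    by (simp add: top ev_def flip: lessThan_Suc_atMost)
  also have "(\<Sum>k<M. c k * ev k * f k) + c M * E * f M + (\<Sum>k<M. - (ev k - E) * c k * f k)
      = E * qracah_sum c p (g*d) M u"
  proof -
    have "(\<Sum>k<M. c k * ev k * f k) + (\<Sum>k<M. - (ev k - E) * c k * f k) = (\<Sum>k<M. E * (c k * f k))"
      by (simp flip: sum.distrib add: algebra_simps)
    then show ?thesis
      using sum.lessThan_Suc [of "\<lambda>k. c k * f k" M, unfolded lessThan_Suc_atMost]
      by (simp add: qracah_sum_def f_def sum_distrib_left algebra_simps)
  qed
  finally show ?thesis
    by (simp add: mult_ac)
qed

definition phi43_coeff ::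
    "complex \<Rightarrow> complex \<Rightarrow> complex \<Rightarrow> complex \<Rightarrow> complex \<Rightarrow> complex \<Rightarrow> nat \<Rightarrow> complex" where
  "phi43_coeff A1 A2 B1 B2 B3 p k =
     qpoch A1 p k * qpoch A2 p k / (qpoch B1 p k * qpoch B2 p k * qpoch B3 p k * qpoch p p k) * p^k"

lemma phi43_coeff_recurrence:
  assumes p: "p \<noteq> 0"
    and nonzero: "qpoch B1 p (Suc k) * qpoch B2 p (Suc k) * qpoch B3 p (Suc k) * qpoch p p (Suc k) \<noteq> 0"
    and params: "B1 = a*p" "B2 = b*d*p" "B3 = g*p" "A1*A2 = a*b*p"
  shows "phi43_coeff A1 A2 B1 B2 B3 p (Suc k) * qracah_offdiag p a b g d (Suc k)
       = - (qracah_eigenvalue p a b k - (A1 - 1) * (1 - A2)) * phi43_coeff A1 A2 B1 B2 B3 p k"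
proof -
  define P where "P = p^k"
  define c where "c = phi43_coeff A1 A2 B1 B2 B3 p k"
  define Y where "Y = (1 - B1*P) * (1 - B2*P) * (1 - B3*P) * (1 - p*P)"
  have P: "P \<noteq> 0"
    using p by (simp add: P_def)
  have Y: "Y \<noteq> 0" "qpoch B1 p k * qpoch B2 p k * qpoch B3 p k * qpoch p p k \<noteq> 0"
    using nonzero by (simp_all add: Y_def P_def qpoch_Suc)
  have step: "phi43_coeff A1 A2 B1 B2 B3 p (Suc k) = c * ((1 - A1*P) * (1 - A2*P) * p / Y)"
    using Y p by (simp add: c_def phi43_coeff_def qpoch_Suc Y_def P_def field_simps)
  have offdiag: "qracah_offdiag p a b g d (Suc k) = - inverse (p*P) * Y"
    by (simp add: qracah_offdiag_def Y_def P_def params mult_ac)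
  have eigenvalue: "qracah_eigenvalue p a b k - (A1 - 1) * (1 - A2) = inverse P * (1 - A1*P) * (1 - A2*P)"
  proof -
    have "qracah_eigenvalue p a b k = (inverse P - 1) * (1 - (A1*A2)*P)"
      by (simp add: qracah_eigenvalue_def P_def params mult_ac)
    then show ?thesis
      using P by (simp add: field_simps)
  qed
  show ?thesis
    unfolding step offdiag eigenvalue c_def [symmetric] using Y(1) p P by (simp add: field_simps)
qed

lemma qracah_eigenvalue_terminating:
  assumes "A1*A2 = a*b*p" and "A1 = inverse (p^M) \<or> A2 = inverse (p^M)" and "p \<noteq> 0"
  shows "qracah_eigenvalue p a b M = (A1 - 1) * (1 - A2)"
proof -
  have "qracah_eigenvalue p a b M = (inverse (p^M) - 1) * (1 - A1 * A2 * p^M)"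
    by (simp add: qracah_eigenvalue_def assms(1) mult_ac)
  with assms(2,3) show ?thesis
    by (auto simp: algebra_simps)
qed

lemma qdiff_qracah_sum_phi43_coeff:
  assumes p: "p \<noteq> 0" and u: "u \<noteq> 0"
    and params: "B1 = a*p" "B2 = b*d*p" "B3 = g*p" "A1*A2 = a*b*p"
    and terminating: "A1 = inverse (p^M) \<or> A2 = inverse (p^M)"
    and nonzero: "qpoch B1 p M * qpoch B2 p M * qpoch B3 p M * qpoch p p M \<noteq> 0"
  shows "qdiff p (qracah_B p a b g d) (qracah_D p a b g d)
           (qracah_sum (phi43_coeff A1 A2 B1 B2 B3 p) p (g*d) M) u
       = qracah_W p (g*d) u * ((A1 - 1) * (1 - A2))
           * qracah_sum (phi43_coeff A1 A2 B1 B2 B3 p) p (g*d) M u"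
proof (rule qdiff_qracah_sum [OF p u])
  fix k assume "k < M"
  then have "qpoch x p (Suc k) = 0 \<Longrightarrow> qpoch x p M = 0" for x
    by (auto simp: qpoch_def prod_zero_iff)
  then show "phi43_coeff A1 A2 B1 B2 B3 p (Suc k) * qracah_offdiag p a b g d (Suc k)
      = - (qracah_eigenvalue p a b k - (A1 - 1) * (1 - A2)) * phi43_coeff A1 A2 B1 B2 B3 p k"
    using nonzero by (intro phi43_coeff_recurrence [OF p _ params]) auto
next
  show "qracah_eigenvalue p a b M = (A1 - 1) * (1 - A2)"
    using params(4) terminating p by (rule qracah_eigenvalue_terminating)
qed

lemma phi43_eq_qracah_sum:
  assumes p: "p \<noteq> 0" and a3: "a3 = inverse w" and a4: "a4 = C*p*w"
    and "K \<le> M" and "\<exists>a\<in>{a1, a2, a3, a4}. a = inverse (p ^ K)"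
  shows "phi43 a1 a2 a3 a4 b1 b2 b3 p = qracah_sum (phi43_coeff a1 a2 b1 b2 b3 p) p C M w"
proof -
  define K0 where "K0 = phi43_term_index a1 a2 a3 a4 p"
  have "K0 \<le> M"
    unfolding K0_def phi43_term_index_def using assms(4,5) by (meson Least_le le_trans)
  have "\<exists>a\<in>{a1, a2, a3, a4}. a = inverse (p ^ K0)"
    unfolding K0_def phi43_term_index_def using assms(5) by (rule LeastI)
  then obtain a where a: "a \<in> {a1, a2, a3, a4}" "a * p ^ K0 = 1"
    using p by auto
  define t where "t k = phi43_coeff a1 a2 b1 b2 b3 p k * qracah_basis p C w k" for k
  have "t k = 0" if "K0 < k" for k
    using qpoch_eq_0 [OF a(2) that] a(1)
    by (auto simp: t_def phi43_coeff_def qracah_basis_def a3 a4 mult_ac)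
  then have "(\<Sum>k\<le>K0. t k) = (\<Sum>k\<le>M. t k)"
    using \<open>K0 \<le> M\<close> by (intro sum.mono_neutral_left) auto
  moreover have "phi43 a1 a2 a3 a4 b1 b2 b3 p = (\<Sum>k\<le>K0. t k)"
    unfolding phi43_def K0_def t_def phi43_coeff_def qracah_basis_def a3 a4
    by (simp add: divide_inverse mult_ac)
  ultimately show ?thesis
    by (simp add: qracah_sum_def t_def)
qed

lemma qracah_basis_eq_poly:
  assumes "w \<noteq> 0"
  shows "qracah_basis p C w k = poly (\<Prod>j<k. [:1 + C*p^(2*j+1), - (p^j):]) (inverse w + C*p*w)"
proof -
  have factor: "(1 - inverse w * p^j) * (1 - C*p*w*p^j)
      = poly [:1 + C*p^(2*j+1), - (p^j):] (inverse w + C*p*w)" for j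
  proof -
    have "p^(2*j+1) = p * p^j * p^j"
      by (simp add: power_add mult_2)
    then show ?thesis
      using assms by (simp add: field_simps) (simp add: mult_2_right flip: power_add)
  qed
  have "qracah_basis p C w k = (\<Prod>j<k. (1 - inverse w * p^j) * (1 - C*p*w*p^j))"
    by (simp add: qracah_basis_def qpoch_def prod.distrib)
  also have "\<dots> = poly (\<Prod>j<k. [:1 + C*p^(2*j+1), - (p^j):]) (inverse w + C*p*w)"
    by (simp add: factor poly_prod)
  finally show ?thesis .
qed

lemma qracah_sum_eq_poly:
  obtains P where "degree P \<le> M"
    and "\<And>w. w \<noteq> 0 \<Longrightarrow> qracah_sum c p C M w = poly P (inverse w + C*p*w)"
proof
  define P where "P = (\<Sum>k\<le>M. smult (c k) (\<Prod>j<k. [:1 + C*p^(2*j+1), - (p^j):]))"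
  show "qracah_sum c p C M w = poly P (inverse w + C*p*w)" if "w \<noteq> 0" for w
    using that by (simp add: P_def qracah_sum_def poly_sum qracah_basis_eq_poly)
  have "degree (\<Prod>j<k. [:1 + C*p^(2*j+1), - (p^j):]) \<le> k" for k
  proof -
    have "degree (\<Prod>j<k. [:1 + C*p^(2*j+1), - (p^j):])
        \<le> (\<Sum>j<k. degree [:1 + C*p^(2*j+1), - (p^j):])"
      using degree_prod_sum_le [of "{..<k}" "\<lambda>j. [:1 + C*p^(2*j+1), - (p^j):]"]
      by (simp add: o_def)
    also have "\<dots> \<le> (\<Sum>j<k. 1)"
      by (rule sum_mono) (simp add: degree_pCons_le)
    finally show ?thesis
      by simp
  qed
  then show "degree P \<le> M"
    unfolding P_def
    by (intro degree_sum_le) (auto intro: order_trans [OF degree_smult_le] order_trans)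
qed

lemma qdiff_cmult: "qdiff p B D (\<lambda>w. c * f w) u = c * qdiff p B D f u"
  by (simp add: qdiff_def algebra_simps)

text \<open>Up to the common factor T = (1 - g u^2)(1 - g p u^2)(1 - g p^2 u^2), the coefficients of
  the base p^2 equation in u^2 are those of a base p equation conjugated by 1/u - g p u;
  ip and iu stand for 1/p and 1/u.\<close>

lemma qracah_coefficients_quadratic_gauge:
  fixes p g X Y Z u ip iu :: complex
  assumes p: "p * ip = 1" and u: "u * iu = 1" and YZ: "Y * Z = 1"
  defines "T \<equiv> (1 - g*u^2) * (1 - g*p*u^2) * (1 - g*p^2*u^2)"
  shows "qracah_B p (X/p) (X/p) g (-1) u * (ip*iu - g*p^2*u) * T
           = (iu - g*p*u) * ip * qracah_B (p^2) (X^2/p^2) p (g*p) (g/p) (u^2)"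
    and "qracah_D p (X/p) (X/p) g (-1) u * (p*iu - g*u) * T
           = (iu - g*p*u) * ip * qracah_D (p^2) (X^2/p^2) p (g*p) (g/p) (u^2)"
    and "(qracah_B p (X/p) (X/p) g (-1) u + qracah_D p (X/p) (X/p) g (-1) u
            + qracah_W p (-g) u * ((Y/p - 1) * (1 - X^2*Z))) * (iu - g*p*u) * T
         = (iu - g*p*u) * ip * (qracah_B (p^2) (X^2/p^2) p (g*p) (g/p) (u^2)
            + qracah_D (p^2) (X^2/p^2) p (g*p) (g/p) (u^2)
            + qracah_W (p^2) (g^2) (u^2) * ((Y - 1) * (1 - p*Z*X^2)))"
proof -
  have "ip = inverse p"
    using inverse_unique [OF p] by simp
  then have "X/p = X*ip" "X^2/p^2 = X^2*ip^2" "g/p = g*ip" "Y/p = Y*ip"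
    by (simp_all add: field_simps)
  note inverses = this p u YZ
  show "qracah_B p (X/p) (X/p) g (-1) u * (ip*iu - g*p^2*u) * T
      = (iu - g*p*u) * ip * qracah_B (p^2) (X^2/p^2) p (g*p) (g/p) (u^2)"
    using inverses unfolding T_def qracah_B_def by algebra
  show "qracah_D p (X/p) (X/p) g (-1) u * (p*iu - g*u) * T
      = (iu - g*p*u) * ip * qracah_D (p^2) (X^2/p^2) p (g*p) (g/p) (u^2)"
    using inverses unfolding T_def qracah_D_def by algebra
  show "(qracah_B p (X/p) (X/p) g (-1) u + qracah_D p (X/p) (X/p) g (-1) u
        + qracah_W p (-g) u * ((Y/p - 1) * (1 - X^2*Z))) * (iu - g*p*u) * T
      = (iu - g*p*u) * ip * (qracah_B (p^2) (X^2/p^2) p (g*p) (g/p) (u^2)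
        + qracah_D (p^2) (X^2/p^2) p (g*p) (g/p) (u^2)
        + qracah_W (p^2) (g^2) (u^2) * ((Y - 1) * (1 - p*Z*X^2)))"
    using inverses unfolding T_def qracah_B_def qracah_D_def qracah_W_def by algebra
qed

lemma qdiff_quadratic_gauge:
  fixes p g X Y Z u :: complex and f :: "complex \<Rightarrow> complex"
  assumes p: "p \<noteq> 0" and u: "u \<noteq> 0" and YZ: "Y * Z = 1"
    and T: "(1 - g*u^2) * (1 - g*p*u^2) * (1 - g*p^2*u^2) \<noteq> 0"
    and f: "qdiff (p^2) (qracah_B (p^2) (X^2/p^2) p (g*p) (g/p)) (qracah_D (p^2) (X^2/p^2) p (g*p) (g/p))
              f (u^2)
          = qracah_W (p^2) (g^2) (u^2) * ((Y - 1) * (1 - p*Z*X^2)) * f (u^2)"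
  shows "qdiff p (qracah_B p (X/p) (X/p) g (-1)) (qracah_D p (X/p) (X/p) g (-1))
           (\<lambda>w. (inverse w - g*p*w) * f (w^2)) u
       = qracah_W p (-g) u * ((Y/p - 1) * (1 - X^2*Z)) * ((inverse u - g*p*u) * f (u^2))"
proof -
  define T where "T = (1 - g*u^2) * (1 - g*p*u^2) * (1 - g*p^2*u^2)"
  define BL where "BL = qracah_B p (X/p) (X/p) g (-1) u"
  define DL where "DL = qracah_D p (X/p) (X/p) g (-1) u"
  define VL where "VL = qracah_W p (-g) u * ((Y/p - 1) * (1 - X^2*Z))"
  define BR where "BR = qracah_B (p^2) (X^2/p^2) p (g*p) (g/p) (u^2)"
  define DR where "DR = qracah_D (p^2) (X^2/p^2) p (g*p) (g/p) (u^2)"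
  define VR where "VR = qracah_W (p^2) (g^2) (u^2) * ((Y - 1) * (1 - p*Z*X^2))"
  define l0 where "l0 = inverse u - g*p*u"
  note gauge = qracah_coefficients_quadratic_gauge
      [where ip = "inverse p" and iu = "inverse u" and p = p and u = u and Y = Y and Z = Z
        and g = g and X = X, folded T_def BL_def DL_def VL_def BR_def DR_def VR_def]
  have l1: "inverse (p*u) - g*p*(p*u) = inverse p * inverse u - g*p^2*u"
    by (simp add: power2_eq_square mult_ac)
  have l2: "inverse (u/p) - g*p*(u/p) = p * inverse u - g*u"
    using p by (simp add: field_simps)
  have f': "BR * f ((p*u)^2) - (BR + DR) * f (u^2) + DR * f ((u/p)^2) = VR * f (u^2)"
    using f by (simp add: qdiff_def BR_def DR_def VR_def power_mult_distrib power_divide)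
  have "T * (BL * ((inverse p * inverse u - g*p^2*u) * f ((p*u)^2)) - (BL + DL) * (l0 * f (u^2))
          + DL * ((p * inverse u - g*u) * f ((u/p)^2)) - VL * (l0 * f (u^2))) = 0"
    using gauge f' p u YZ unfolding l0_def by (simp add: algebra_simps) algebra
  moreover have "T \<noteq> 0"
    using T by (simp add: T_def)
  ultimately have "BL * ((inverse p * inverse u - g*p^2*u) * f ((p*u)^2)) - (BL + DL) * (l0 * f (u^2))
          + DL * ((p * inverse u - g*u) * f ((u/p)^2)) = VL * (l0 * f (u^2))"
    by simp
  then show ?thesis
    unfolding qdiff_def l1 l2 BL_def DL_def VL_def l0_def .
qed

lemma qdiff_solutions_eq_on_powers:
  assumes p: "p \<noteq> 0"
    and f: "\<And>k. k < N \<Longrightarrow> qdiff p B D f (p^k) = V (p^k) * f (p^k)"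
    and h: "\<And>k. k < N \<Longrightarrow> qdiff p B D h (p^k) = V (p^k) * h (p^k)"
    and B: "\<And>k. k < N \<Longrightarrow> B (p^k) \<noteq> 0"
    and D: "D 1 = 0" and init: "f 1 = h 1"
  shows "m \<le> N \<Longrightarrow> f (p^m) = h (p^m)"
proof (induction m rule: less_induct)
  case (less m)
  show ?case
  proof (cases m)
    case 0
    with init show ?thesis
      by simp
  next
    case (Suc k)
    with less.prems have "k < N"
      by simp
    have here: "f (p^k) = h (p^k)"
      using less Suc by simp
    have below: "D (p^k) * f (p^k / p) = D (p^k) * h (p^k / p)"
    proof (cases k)
      case (Suc j)
      with less.IH [of j] \<open>m = Suc k\<close> less.prems p show ?thesis
        by simp
    qed (simp add: D)
    have "B (p^k) * f (p * p^k) = B (p^k) * h (p * p^k)"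
      using f [OF \<open>k < N\<close>] h [OF \<open>k < N\<close>] here below
      unfolding qdiff_def by algebra
    with B [OF \<open>k < N\<close>] Suc show ?thesis
      by simp
  qed
qed

lemma eq_at_point_if_continuous_and_eq_off_finite:
  fixes f h :: "'a::{perfect_space, t2_space} \<Rightarrow> 'b::t2_space"
  assumes "isCont f x" "isCont h x" "finite S" "\<And>y. y \<notin> S \<Longrightarrow> f y = h y"
  shows "f x = h x"
proof -
  have "eventually (\<lambda>y. y \<notin> S) (at x)"
    using islimpt_finite [OF assms(3)] by (simp add: islimpt_iff_eventually)
  then have "eventually (\<lambda>y. f y = h y) (at x)"
    by (rule eventually_mono) (use assms(4) in blast)
  then have "(h \<longlongrightarrow> f x) (at x)"
    using assms(1) by (simp add: isCont_def tendsto_cong)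
  then show ?thesis
    using assms(2) by (simp add: isCont_def tendsto_unique [OF at_neq_bot])
qed

text \<open>The two sides of the theorem for base p, u = p^x and g = \<gamma>; the left sum is truncated
  at min (2n+1) (2(N-n)), where its first numerator parameter terminates.\<close>

definition quadratic_lhs :: "complex \<Rightarrow> nat \<Rightarrow> nat \<Rightarrow> complex \<Rightarrow> complex \<Rightarrow> complex" where
  "quadratic_lhs p N n g u =
     qracah_sum (phi43_coeff (inverse (p^(2*n+1))) (inverse (p^(2*(N-n))))
                  (inverse (p^N)) (- inverse (p^N)) (g*p) p)
       p (-g) (min (2*n+1) (2*(N-n))) u"

definition quadratic_rhs_sum :: "complex \<Rightarrow> nat \<Rightarrow> nat \<Rightarrow> complex \<Rightarrow> complex \<Rightarrow> complex" where
  "quadratic_rhs_sum p N n g v =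
     qracah_sum (phi43_coeff (inverse ((p^2)^n)) (p^(2*n+1) / p^(2*N))
                  (inverse ((p^2)^N)) (g*p^2) (g*p^3) (p^2))
       (p^2) (g^2) n v"

definition quadratic_rhs :: "complex \<Rightarrow> nat \<Rightarrow> nat \<Rightarrow> complex \<Rightarrow> complex \<Rightarrow> complex" where
  "quadratic_rhs p N n g u = (inverse u - g*p*u) / (1 - g*p) * quadratic_rhs_sum p N n g (u^2)"

text \<open>The hypothesis inj (\<lambda>k. p^k) says that p is neither 0 nor a root of unity.\<close>

locale quadratic_transformation =
  fixes p :: complex and N n :: nat
  assumes p_pow_inj: "inj (\<lambda>k::nat. p^k)" and n_le_N: "n \<le> N"
begin

lemma p_pow_eq_iff: "p^a = p^b \<longleftrightarrow> a = b"
  using p_pow_inj by (auto dest: injD)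

lemma p_nonzero: "p \<noteq> 0"
  using p_pow_eq_iff [of 1 2] by auto

lemma p_pow_neq_minus: "p^a \<noteq> - (p^b)"
proof
  assume "p^a = - (p^b)"
  then have "p^(a*2) = p^(b*2)"
    by (simp add: power_mult)
  then have "a = b"
    by (simp add: p_pow_eq_iff)
  with \<open>p^a = - (p^b)\<close> p_nonzero show False
    by simp
qed

lemma inverse_p_pow_mult_eq_1_iff: "inverse (p^a) * p^b = 1 \<longleftrightarrow> a = b"
proof -
  have "inverse (p^a) * p^b = 1 \<longleftrightarrow> p^b = p^a"
    using p_nonzero by (auto simp: field_simps)
  then show ?thesis
    by (auto simp: p_pow_eq_iff)
qed

lemma qpoch_inverse_p_pow_nonzero:
  assumes "0 < t" and "k \<le> N"
  shows "qpoch (inverse ((p^t)^N)) (p^t) k \<noteq> 0"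
proof (rule qpoch_nonzero)
  fix j assume "j < k"
  with assms have "t*j \<noteq> t*N"
    by simp
  then show "inverse ((p^t)^N) * (p^t)^j \<noteq> 1"
    by (simp add: inverse_p_pow_mult_eq_1_iff flip: power_mult)
qed

lemma qpoch_minus_inverse_p_pow_nonzero: "qpoch (- inverse (p^N)) p k \<noteq> 0"
proof (rule qpoch_nonzero)
  fix j
  show "- inverse (p^N) * p^j \<noteq> 1"
    using p_pow_neq_minus [of N j] p_nonzero by (auto simp: field_simps)
qed

lemma qpoch_p_pow_nonzero: "0 < t \<Longrightarrow> qpoch (p^t) (p^t) k \<noteq> 0"
proof (rule qpoch_nonzero)
  fix j assume "0 < t"
  then show "p^t * (p^t)^j \<noteq> 1"
    using p_pow_eq_iff [of "t + t*j" 0] by (simp add: power_add power_mult)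
qed

lemma qpoch_g_p_pow_nonzero:
  assumes "\<And>j. 0 < j \<Longrightarrow> j \<le> 2*N+3 \<Longrightarrow> g*p^j \<noteq> 1" and "0 < s" and "s + t*k \<le> 2*N+3 + t"
  shows "qpoch (g*p^s) (p^t) k \<noteq> 0"
proof (rule qpoch_nonzero)
  fix j assume "j < k"
  then have "t * Suc j \<le> t * k"
    by (intro mult_le_mono2) simp
  then have "s + t*j \<le> 2*N+3"
    using assms(3) by simp
  then show "g*p^s * (p^t)^j \<noteq> 1"
    using assms(1) [of "s + t*j"] assms(2) by (simp add: power_add power_mult mult.assoc)
qed

lemma lhs_denominators_nonzero:
  assumes "\<And>j. 0 < j \<Longrightarrow> j \<le> 2*N+3 \<Longrightarrow> g*p^j \<noteq> 1" and "M \<le> N"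
  shows "qpoch (inverse (p^N)) p M * qpoch (- inverse (p^N)) p M * qpoch (g*p) p M * qpoch p p M \<noteq> 0"
  using qpoch_inverse_p_pow_nonzero [of 1 M] qpoch_minus_inverse_p_pow_nonzero [of M]
    qpoch_g_p_pow_nonzero [OF assms(1), of 1 1 M] qpoch_p_pow_nonzero [of 1 M] assms(2)
  by simp

lemma rhs_denominators_nonzero:
  assumes "\<And>j. 0 < j \<Longrightarrow> j \<le> 2*N+3 \<Longrightarrow> g*p^j \<noteq> 1" and "k \<le> n"
  shows "qpoch (inverse ((p^2)^N)) (p^2) k * qpoch (g*p^2) (p^2) k * qpoch (g*p^3) (p^2) k
         * qpoch (p^2) (p^2) k \<noteq> 0"
  using qpoch_inverse_p_pow_nonzero [of 2 k] qpoch_g_p_pow_nonzero [OF assms(1), of 2 2 k]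
    qpoch_g_p_pow_nonzero [OF assms(1), of 3 2 k] qpoch_p_pow_nonzero [of 2 k] n_le_N assms(2)
  by simp

context
  fixes g :: complex
  assumes g_generic: "\<And>j. j \<le> 2*N+3 \<Longrightarrow> g*p^j \<noteq> 1 \<and> g*p^j \<noteq> -1"
begin

lemma lhs_qdiff:
  assumes u: "u \<noteq> 0"
  shows "qdiff p (qracah_B p (inverse (p^N)/p) (inverse (p^N)/p) g (-1))
                 (qracah_D p (inverse (p^N)/p) (inverse (p^N)/p) g (-1)) (quadratic_lhs p N n g) u
       = qracah_W p (-g) u * ((inverse (p^(2*n))/p - 1) * (1 - (inverse (p^N))^2 * p^(2*n)))
         * quadratic_lhs p N n g u"
proof -
  define M where "M = min (2*n+1) (2*(N-n))"
  define A1 where "A1 = inverse (p^(2*n+1))"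
  define A2 where "A2 = inverse (p^(2*(N-n)))"
  have M_le_N: "M \<le> N"
    unfolding M_def min_def using n_le_N by auto
  have p: "p \<noteq> 0"
    by (rule p_nonzero)
  have "n*2 + (N-n)*2 = N + N"
    using n_le_N by simp
  then have square: "p^(n*2) * p^((N-n)*2) = p^N * p^N"
    by (simp flip: power_add)
  have A1A2: "A1 * A2 = inverse (p^N)/p * (inverse (p^N)/p) * p"
    using p square by (simp add: A1_def A2_def field_simps)
  have eigenvalue: "(A1 - 1) * (1 - A2) = (inverse (p^(2*n))/p - 1) * (1 - (inverse (p^N))^2 * p^(2*n))"
  proof -
    have "A2 = (inverse (p^N))^2 * p^(2*n)"
      using p square by (simp add: A2_def field_simps power2_eq_square)
    then show ?thesis
      using p by (simp add: A1_def field_simps)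
  qed
  have g: "\<And>j. 0 < j \<Longrightarrow> j \<le> 2*N+3 \<Longrightarrow> g*p^j \<noteq> 1"
    using g_generic by blast
  have "qdiff p (qracah_B p (inverse (p^N)/p) (inverse (p^N)/p) g (-1))
                (qracah_D p (inverse (p^N)/p) (inverse (p^N)/p) g (-1))
          (qracah_sum (phi43_coeff A1 A2 (inverse (p^N)) (- inverse (p^N)) (g*p) p) p (g * -1) M) u
      = qracah_W p (g * -1) u * ((A1 - 1) * (1 - A2))
          * qracah_sum (phi43_coeff A1 A2 (inverse (p^N)) (- inverse (p^N)) (g*p) p) p (g * -1) M u"
  proof (rule qdiff_qracah_sum_phi43_coeff [OF p u _ _ _ A1A2])
    show "A1 = inverse (p^M) \<or> A2 = inverse (p^M)"
      by (auto simp: A1_def A2_def M_def min_def)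
    show "qpoch (inverse (p^N)) p M * qpoch (- inverse (p^N)) p M * qpoch (g*p) p M * qpoch p p M \<noteq> 0"
      using g M_le_N by (rule lhs_denominators_nonzero)
  qed (use p in simp_all)
  then show ?thesis
    unfolding eigenvalue [symmetric] by (simp add: quadratic_lhs_def [abs_def] A1_def A2_def M_def)
qed

lemma rhs_sum_qdiff:
  assumes v: "v \<noteq> 0"
  shows "qdiff (p^2) (qracah_B (p^2) ((inverse (p^N))^2/p^2) p (g*p) (g/p))
                     (qracah_D (p^2) ((inverse (p^N))^2/p^2) p (g*p) (g/p)) (quadratic_rhs_sum p N n g) v
       = qracah_W (p^2) (g^2) v * ((inverse (p^(2*n)) - 1) * (1 - p * p^(2*n) * (inverse (p^N))^2))
         * quadratic_rhs_sum p N n g v"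
proof -
  define A1 where "A1 = inverse ((p^2)^n)"
  define A2 where "A2 = p^(2*n+1) / p^(2*N)"
  have p: "p \<noteq> 0"
    by (rule p_nonzero)
  have g: "\<And>j. 0 < j \<Longrightarrow> j \<le> 2*N+3 \<Longrightarrow> g*p^j \<noteq> 1"
    using g_generic by blast
  have "qdiff (p^2) (qracah_B (p^2) ((inverse (p^N))^2/p^2) p (g*p) (g/p))
                    (qracah_D (p^2) ((inverse (p^N))^2/p^2) p (g*p) (g/p))
          (qracah_sum (phi43_coeff A1 A2 (inverse ((p^2)^N)) (g*p^2) (g*p^3) (p^2)) (p^2) (g*p * (g/p)) n) v
      = qracah_W (p^2) (g*p * (g/p)) v * ((A1 - 1) * (1 - A2))
          * qracah_sum (phi43_coeff A1 A2 (inverse ((p^2)^N)) (g*p^2) (g*p^3) (p^2)) (p^2) (g*p * (g/p)) n v"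
  proof (rule qdiff_qracah_sum_phi43_coeff)
    show "A1 = inverse ((p^2)^n) \<or> A2 = inverse ((p^2)^n)"
      by (simp add: A1_def)
    show "qpoch (inverse ((p^2)^N)) (p^2) n * qpoch (g*p^2) (p^2) n * qpoch (g*p^3) (p^2) n
        * qpoch (p^2) (p^2) n \<noteq> 0"
      using g le_refl by (rule rhs_denominators_nonzero)
    show "A1 * A2 = (inverse (p^N))^2/p^2 * p * p^2"
      using p by (simp add: A1_def A2_def field_simps flip: power_mult)
  qed (use p v in \<open>simp_all add: field_simps eval_nat_numeral flip: power_mult\<close>)
  moreover have "(A1 - 1) * (1 - A2) = (inverse (p^(2*n)) - 1) * (1 - p * p^(2*n) * (inverse (p^N))^2)"
    using p by (simp add: A1_def A2_def field_simps flip: power_mult)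
  ultimately show ?thesis
    using p by (simp add: quadratic_rhs_sum_def [abs_def] A1_def A2_def power2_eq_square)
qed

lemma rhs_qdiff:
  assumes u: "u \<noteq> 0" and T: "(1 - g*u^2) * (1 - g*p*u^2) * (1 - g*p^2*u^2) \<noteq> 0"
  shows "qdiff p (qracah_B p (inverse (p^N)/p) (inverse (p^N)/p) g (-1))
                 (qracah_D p (inverse (p^N)/p) (inverse (p^N)/p) g (-1)) (quadratic_rhs p N n g) u
       = qracah_W p (-g) u * ((inverse (p^(2*n))/p - 1) * (1 - (inverse (p^N))^2 * p^(2*n)))
         * quadratic_rhs p N n g u"
proof -
  have "quadratic_rhs p N n g
      = (\<lambda>w. inverse (1 - g*p) * ((inverse w - g*p*w) * quadratic_rhs_sum p N n g (w^2)))"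
    by (simp add: fun_eq_iff quadratic_rhs_def divide_inverse mult_ac)
  moreover have "qdiff p (qracah_B p (inverse (p^N)/p) (inverse (p^N)/p) g (-1))
                         (qracah_D p (inverse (p^N)/p) (inverse (p^N)/p) g (-1))
                   (\<lambda>w. (inverse w - g*p*w) * quadratic_rhs_sum p N n g (w^2)) u
      = qracah_W p (-g) u * ((inverse (p^(2*n))/p - 1) * (1 - (inverse (p^N))^2 * p^(2*n)))
        * ((inverse u - g*p*u) * quadratic_rhs_sum p N n g (u^2))"
    by (rule qdiff_quadratic_gauge [OF p_nonzero u _ T rhs_sum_qdiff]) (simp_all add: p_nonzero u)
  ultimately show ?thesis
    by (simp add: qdiff_cmult)
qed

lemma lhs_at_1: "quadratic_lhs p N n g 1 = 1"
  by (simp add: quadratic_lhs_def qracah_sum_at_1 phi43_coeff_def)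

lemma rhs_at_1: "quadratic_rhs p N n g 1 = 1"
proof -
  have "1 - g*p \<noteq> 0"
    using g_generic [of 1] by auto
  then show ?thesis
    by (simp add: quadratic_rhs_def quadratic_rhs_sum_def qracah_sum_at_1 phi43_coeff_def)
qed

lemma generic_factors_nonzero: "j \<le> 2*N+3 \<Longrightarrow> 1 - g*p^j \<noteq> 0 \<and> 1 + g*p^j \<noteq> 0"
  using g_generic [of j] by (auto simp: add_eq_0_iff)

lemma lhs_B_nonzero:
  assumes "k < N"
  shows "qracah_B p (inverse (p^N)/p) (inverse (p^N)/p) g (-1) (p^k) \<noteq> 0"
proof -
  have "qracah_B p (inverse (p^N)/p) (inverse (p^N)/p) g (-1) (p^k)
      = (1 - inverse (p^N) * p^k) * (1 + inverse (p^N) * p^k)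
        * (1 - g*p^Suc k) * (1 + g*p^(k*2)) * (1 + g*p^Suc k)"
    using p_nonzero by (simp add: qracah_B_def power_mult mult_ac)
  moreover have "inverse (p^N) * p^k \<noteq> 1" "inverse (p^N) * p^k \<noteq> -1"
    using assms inverse_p_pow_mult_eq_1_iff [of N k] p_pow_neq_minus [of k N] p_nonzero
    by (auto simp: field_simps)
  ultimately show ?thesis
    using generic_factors_nonzero [of "Suc k"] generic_factors_nonzero [of "k*2"] assms
    by (auto simp: add_eq_0_iff)
qed

lemma rhs_gauge_factor_nonzero:
  assumes "k < N"
  shows "(1 - g*(p^k)^2) * (1 - g*p*(p^k)^2) * (1 - g*p^2*(p^k)^2) \<noteq> 0"
proof -
  have powers: "g*(p^k)^2 = g*p^(k*2)" "g*p*(p^k)^2 = g*p^Suc (k*2)"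
    "g*p^2*(p^k)^2 = g*p^Suc (Suc (k*2))"
    by (simp_all add: power_mult mult_ac power2_eq_square)
  show ?thesis
    unfolding powers using generic_factors_nonzero [of "k*2"] generic_factors_nonzero [of "Suc (k*2)"]
      generic_factors_nonzero [of "Suc (Suc (k*2))"] assms
    by simp
qed

lemma lhs_eq_rhs_on_powers: "m \<le> N \<Longrightarrow> quadratic_lhs p N n g (p^m) = quadratic_rhs p N n g (p^m)"
proof (rule qdiff_solutions_eq_on_powers [OF p_nonzero])
  fix k assume "k < N"
  have u: "p^k \<noteq> 0"
    using p_nonzero by simp
  show "qdiff p (qracah_B p (inverse (p^N)/p) (inverse (p^N)/p) g (-1))
                (qracah_D p (inverse (p^N)/p) (inverse (p^N)/p) g (-1)) (quadratic_lhs p N n g) (p^k)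
      = qracah_W p (-g) (p^k) * ((inverse (p^(2*n))/p - 1) * (1 - (inverse (p^N))^2 * p^(2*n)))
        * quadratic_lhs p N n g (p^k)"
    using u by (rule lhs_qdiff)
  show "qdiff p (qracah_B p (inverse (p^N)/p) (inverse (p^N)/p) g (-1))
                (qracah_D p (inverse (p^N)/p) (inverse (p^N)/p) g (-1)) (quadratic_rhs p N n g) (p^k)
      = qracah_W p (-g) (p^k) * ((inverse (p^(2*n))/p - 1) * (1 - (inverse (p^N))^2 * p^(2*n)))
        * quadratic_rhs p N n g (p^k)"
    using u rhs_gauge_factor_nonzero [OF \<open>k < N\<close>] by (rule rhs_qdiff)
  show "qracah_B p (inverse (p^N)/p) (inverse (p^N)/p) g (-1) (p^k) \<noteq> 0"
    using \<open>k < N\<close> by (rule lhs_B_nonzero)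
next
  show "qracah_D p (inverse (p^N)/p) (inverse (p^N)/p) g (-1) 1 = 0"
    by (simp add: qracah_D_def)
qed (simp add: lhs_at_1 rhs_at_1)

lemma inj_on_quadratic_variable: "inj_on (\<lambda>m. inverse (p^m) - g*p*p^m) {..N}"
proof (rule inj_onI)
  fix a b assume "a \<in> {..N}" "b \<in> {..N}"
    and eq: "inverse (p^a) - g*p*p^a = inverse (p^b) - g*p*p^b"
  have "(x - y) * (1 + g*p*x*y) = 0"
    if "x * ix = 1" "y * iy = 1" "ix - g*p*x = iy - g*p*y" for x y ix iy :: complex
    using that by algebra
  from this [OF _ _ eq] have "(p^a - p^b) * (1 + g*p*p^a*p^b) = 0"
    using p_nonzero by simp
  then have "(p^a - p^b) * (1 + g*p^(a+b+1)) = 0"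
    using p_nonzero by (simp add: power_add mult_ac)
  moreover have "1 + g*p^(a+b+1) \<noteq> 0"
    using g_generic [of "a+b+1"] \<open>a \<in> {..N}\<close> \<open>b \<in> {..N}\<close> by (auto simp: add_eq_0_iff)
  ultimately show "a = b"
    by (simp add: p_pow_eq_iff)
qed

text \<open>For 2n+1 \<le> N both sides are polynomials of degree at most 2n+1 in 1/u - g p u,
  and they agree at the N+1 distinct values taken at u = p^m, m \<le> N.\<close>

lemma lhs_eq_rhs_generic:
  assumes "2*n+1 \<le> N" and u: "u \<noteq> 0"
  shows "quadratic_lhs p N n g u = quadratic_rhs p N n g u"
proof -
  define \<mu> where "\<mu> w = inverse w - g*p*w" for w
  have M: "min (2*n+1) (2*(N-n)) = 2*n+1"
    using assms(1) by simp
  obtain P where deg_P: "degree P \<le> 2*n+1"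
    and P': "\<And>w. w \<noteq> 0 \<Longrightarrow> quadratic_lhs p N n g w = poly P (inverse w + - g*p*w)"
    unfolding quadratic_lhs_def M using qracah_sum_eq_poly by blast
  have P: "quadratic_lhs p N n g w = poly P (\<mu> w)" if "w \<noteq> 0" for w
    using P' [OF that] by (simp add: \<mu>_def)
  obtain R where deg_R: "degree R \<le> n"
    and R: "\<And>v. v \<noteq> 0 \<Longrightarrow> quadratic_rhs_sum p N n g v = poly R (inverse v + g^2*p^2 * v)"
    unfolding quadratic_rhs_sum_def using qracah_sum_eq_poly by blast
  define Q where "Q = smult (inverse (1 - g*p)) ([:0, 1:] * pcompose R [:2*g*p, 0, 1:])"
  have Q: "quadratic_rhs p N n g w = poly Q (\<mu> w)" if "w \<noteq> 0" for w
  proof -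
    have "poly [:2*g*p, 0, 1:] (\<mu> w) = inverse (w^2) + g^2*p^2*w^2"
      using that by (simp add: \<mu>_def field_simps power2_eq_square)
    then have "poly Q (\<mu> w) = inverse (1 - g*p) * (\<mu> w * quadratic_rhs_sum p N n g (w^2))"
      using that by (simp add: Q_def poly_pcompose R)
    then show ?thesis
      by (simp add: quadratic_rhs_def \<mu>_def divide_inverse mult_ac)
  qed
  have deg_Q: "degree Q \<le> 2*n+1"
  proof -
    have "degree ([:0, 1:] * pcompose R [:2*g*p, 0, 1:]) \<le> 1 + degree R * 2"
      using degree_mult_le [of "[:0, 1:]" "pcompose R [:2*g*p, 0, 1:]"]
      by (simp add: degree_pcompose)
    then show ?thesis
      using deg_R degree_smult_le [of "inverse (1 - g*p)" "[:0, 1:] * pcompose R [:2*g*p, 0, 1:]"]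
      unfolding Q_def by linarith
  qed
  have "card ((\<lambda>m. \<mu> (p^m)) ` {..N}) = N + 1"
    using card_image [OF inj_on_quadratic_variable] by (simp add: \<mu>_def)
  moreover have "poly P x = poly Q x" if "x \<in> (\<lambda>m. \<mu> (p^m)) ` {..N}" for x
    using that lhs_eq_rhs_on_powers p_nonzero by (auto simp: P [symmetric] Q [symmetric])
  ultimately have "P = Q"
    using deg_P deg_Q assms(1) by (intro poly_eqI_degree [where A = "(\<lambda>m. \<mu> (p^m)) ` {..N}"]) auto
  then show ?thesis
    using P [OF u] Q [OF u] by simp
qed

end

text \<open>The identity extends from generic g to all admissible \<gamma> by continuity, both sides
  being rational in g with poles only where \<gamma> p^j = 1.\<close>

lemma lhs_eq_rhs:
  assumes \<gamma>: "\<And>j. 0 < j \<Longrightarrow> \<gamma> * p^j \<noteq> 1" and u: "u \<noteq> 0"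
    and range: "2*n+1 \<le> N \<or> (\<exists>m\<le>N. u = p^m)"
  shows "quadratic_lhs p N n \<gamma> u = quadratic_rhs p N n \<gamma> u"
proof (rule eq_at_point_if_continuous_and_eq_off_finite
    [where f = "\<lambda>g. quadratic_lhs p N n g u" and h = "\<lambda>g. quadratic_rhs p N n g u"])
  have \<gamma>': "\<And>j. 0 < j \<Longrightarrow> j \<le> 2*N+3 \<Longrightarrow> \<gamma> * p^j \<noteq> 1"
    using \<gamma> by blast
  have M_le_N: "min (2*n+1) (2*(N-n)) \<le> N"
    unfolding min_def using n_le_N by auto
  have "qpoch (inverse (p^N)) p k * qpoch (- inverse (p^N)) p k * qpoch (\<gamma>*p) p k * qpoch p p k \<noteq> 0"
    if "k \<le> min (2*n+1) (2*(N-n))" for k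
  proof -
    from that M_le_N have "k \<le> N"
      by linarith
    with \<gamma>' show ?thesis
      by (rule lhs_denominators_nonzero)
  qed
  then show "isCont (\<lambda>g. quadratic_lhs p N n g u) \<gamma>"
    unfolding isCont_def quadratic_lhs_def qracah_sum_def phi43_coeff_def qracah_basis_def
    by (intro tendsto_intros) auto
  have "1 - \<gamma>*p \<noteq> 0"
    using \<gamma> [of 1] by auto
  then show "isCont (\<lambda>g. quadratic_rhs p N n g u) \<gamma>"
    using rhs_denominators_nonzero [OF \<gamma>']
    unfolding isCont_def quadratic_rhs_def quadratic_rhs_sum_def qracah_sum_def phi43_coeff_def
      qracah_basis_def
    by (intro tendsto_intros) auto
  show "finite ((\<lambda>j. inverse (p^j)) ` {..2*N+3} \<union> (\<lambda>j. - inverse (p^j)) ` {..2*N+3})"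
    by simp
  fix g assume "g \<notin> (\<lambda>j. inverse (p^j)) ` {..2*N+3} \<union> (\<lambda>j. - inverse (p^j)) ` {..2*N+3}"
  then have g: "g*p^j \<noteq> 1 \<and> g*p^j \<noteq> -1" if "j \<le> 2*N+3" for j
    using that p_nonzero by (auto simp: field_simps)
  from range show "quadratic_lhs p N n g u = quadratic_rhs p N n g u"
    using lhs_eq_rhs_generic [OF g _ u] lhs_eq_rhs_on_powers [OF g] by auto
qed

lemma phi43_identity:
  assumes \<gamma>: "\<And>j. 0 < j \<Longrightarrow> \<gamma> * p^j \<noteq> 1" and u: "u \<noteq> 0"
    and range: "2*n+1 \<le> N \<or> (\<exists>m\<le>N. u = p^m)"
  shows "phi43 (inverse (p^(2*n+1))) (inverse (p^(2*(N-n)))) (inverse u) (- \<gamma> * (u*p))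
            (inverse (p^N)) (- inverse (p^N)) (\<gamma>*p) p
       = (inverse u - \<gamma> * (u*p)) / (1 - \<gamma>*p)
         * phi43 (inverse ((p^2)^n)) (p^(2*n+1) / p^(2*N)) (inverse (u^2)) (\<gamma>^2 * (u^2*p^2))
             (inverse ((p^2)^N)) (\<gamma>*p^2) (\<gamma>*p^3) (p^2)"
proof -
  have "phi43 (inverse (p^(2*n+1))) (inverse (p^(2*(N-n)))) (inverse u) (- \<gamma> * (u*p))
          (inverse (p^N)) (- inverse (p^N)) (\<gamma>*p) p = quadratic_lhs p N n \<gamma> u"
    unfolding quadratic_lhs_def
    by (rule phi43_eq_qracah_sum [OF p_nonzero, where K = "min (2*n+1) (2*(N-n))"])
      (auto simp: min_def)
  moreover have "phi43 (inverse ((p^2)^n)) (p^(2*n+1) / p^(2*N)) (inverse (u^2)) (\<gamma>^2 * (u^2*p^2))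
          (inverse ((p^2)^N)) (\<gamma>*p^2) (\<gamma>*p^3) (p^2) = quadratic_rhs_sum p N n \<gamma> (u^2)"
    unfolding quadratic_rhs_sum_def
    by (rule phi43_eq_qracah_sum [where K = n]) (auto simp: p_nonzero mult_ac)
  ultimately show ?thesis
    using lhs_eq_rhs [OF assms] by (simp add: quadratic_rhs_def mult_ac)
qed

end

lemma qpw_eq_exp: "0 < q \<Longrightarrow> qpw q s = exp (s * of_real (ln q))"
  by (simp add: qpw_def powr_def Ln_of_real)

lemma qpw_nonzero: "0 < q \<Longrightarrow> qpw q s \<noteq> 0"
  by (simp add: qpw_eq_exp)

lemma qpw_add: "0 < q \<Longrightarrow> qpw q (s + t) = qpw q s * qpw q t"
  by (simp add: qpw_eq_exp distrib_right exp_add)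

lemma qpw_minus: "0 < q \<Longrightarrow> qpw q (- s) = inverse (qpw q s)"
  by (simp add: qpw_eq_exp exp_minus)

lemma qpw_of_nat_mult: "0 < q \<Longrightarrow> qpw q (of_nat k * s) = qpw q s ^ k"
  by (simp add: qpw_eq_exp mult.assoc exp_of_nat_mult)

lemma qpw_of_nat: "0 < q \<Longrightarrow> qpw q (of_nat k) = of_real q ^ k"
  using qpw_of_nat_mult [of q k 1] by (simp add: qpw_eq_exp exp_of_real)

lemma inj_power_of_real:
  assumes "0 < q" "q < 1"
  shows "inj (\<lambda>k::nat. complex_of_real q ^ k)"
proof (rule injI)
  fix a b :: nat
  assume "complex_of_real q ^ a = complex_of_real q ^ b"
  then have "q ^ a = q ^ b"
    by (metis of_real_eq_iff of_real_power)
  then show "a = b"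
    using assms by (metis linorder_neqE_nat power_strict_decreasing order_less_irrefl)
qed

lemma quadratic_transformation_real_base:
  fixes q :: real and N n :: nat and \<gamma> x :: complex
  assumes q: "0 < q" "q < 1" and "n \<le> N"
    and \<gamma>: "\<forall>j::nat. \<gamma> * qpw q 1 \<noteq> qpw q (- of_nat j)"
    and range: "2*n+1 \<le> N \<or> (\<exists>m\<le>N. x = of_nat m)"
  shows "phi43 (qpw q (- (2 * of_nat n + 1))) (qpw q (- 2 * (of_nat N - of_nat n))) (qpw q (- x))
            (- \<gamma> * qpw q (x + 1))
            (qpw q (- of_nat N)) (- qpw q (- of_nat N)) (\<gamma> * qpw q 1) (qpw q 1)
    = (qpw q (- x) - \<gamma> * qpw q (x + 1)) / (1 - \<gamma> * qpw q 1) *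
      phi43 (qpw q (- 2 * of_nat n)) (qpw q (2 * of_nat n - 2 * of_nat N + 1)) (qpw q (- 2 * x))
            (\<gamma>\<^sup>2 * qpw q (2 * x + 2))
            (qpw q (- 2 * of_nat N)) (\<gamma> * qpw q 2) (\<gamma> * qpw q 3) (qpw q 2)"
proof -
  define p where "p = complex_of_real q"
  define u where "u = qpw q x"
  interpret quadratic_transformation p N n
    using inj_power_of_real [OF q] \<open>n \<le> N\<close> by unfold_locales (simp_all add: p_def)
  have nat_power: "qpw q (of_nat k) = p^k" "qpw q (- of_nat k) = inverse (p^k)" for k
    using qpw_of_nat [OF q(1)] qpw_minus [OF q(1)] by (simp_all add: p_def)
  have "(- (2 * of_nat n + 1) :: complex) = - of_nat (2*n+1)"
    "(- 2 * (of_nat N - of_nat n) :: complex) = - of_nat (2*(N-n))"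
    "(- 2 * of_nat n :: complex) = - of_nat (2*n)" "(- 2 * of_nat N :: complex) = - of_nat (2*N)"
    "(2 * of_nat n - 2 * of_nat N + 1 :: complex) = of_nat (2*n+1) + - of_nat (2*N)"
    using \<open>n \<le> N\<close> by (simp_all add: of_nat_diff)
  then have "qpw q (- (2 * of_nat n + 1)) = inverse (p^(2*n+1))"
    "qpw q (- 2 * (of_nat N - of_nat n)) = inverse (p^(2*(N-n)))"
    "qpw q (- 2 * of_nat n) = inverse ((p^2)^n)" "qpw q (- 2 * of_nat N) = inverse ((p^2)^N)"
    "qpw q (2 * of_nat n - 2 * of_nat N + 1) = p^(2*n+1) / p^(2*N)"
    by (simp_all only: nat_power qpw_add [OF q(1)] power_mult divide_inverse)
  moreover have "qpw q 1 = p" "qpw q 2 = p^2" "qpw q 3 = p^3"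
    using nat_power(1) [of 1] nat_power(1) [of 2] nat_power(1) [of 3] by simp_all
  moreover have "qpw q (- x) = inverse u" "qpw q (x + 1) = u*p"
    using qpw_minus [OF q(1)] qpw_add [OF q(1)] nat_power(1) [of 1] by (simp_all add: u_def)
  moreover have "qpw q (- 2 * x) = inverse (u^2)" "qpw q (2 * x + 2) = u^2 * p^2"
    using qpw_minus [OF q(1)] qpw_add [OF q(1)] qpw_of_nat_mult [OF q(1), of 2 x] nat_power(1) [of 2]
    by (simp_all add: u_def)
  moreover have "\<gamma> * p^j \<noteq> 1" if "0 < j" for j
  proof
    assume "\<gamma> * p^j = 1"
    moreover obtain i where "j = Suc i"
      using \<open>0 < j\<close> gr0_implies_Suc by blast
    ultimately have "p^i * (\<gamma> * p) = 1"
      by (simp add: mult_ac)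
    then have "\<gamma> * qpw q 1 = qpw q (- of_nat i)"
      using nat_power(1) [of 1] nat_power(2) [of i] inverse_unique by fastforce
    with \<gamma> show False
      by blast
  qed
  moreover have "u \<noteq> 0" and "2*n+1 \<le> N \<or> (\<exists>m\<le>N. u = p^m)"
    using qpw_nonzero [OF q(1)] range nat_power(1) by (auto simp: u_def)
  ultimately show ?thesis
    using phi43_identity nat_power(2) [of N] by simp
qed

theorem mainTheorem10:
  fixes q :: real and N n :: nat and \<gamma> :: complex
  assumes "0 < q" and "q < 1" and "0 < N" and "n \<le> N"
    and "\<forall>j::nat. \<gamma> * qpw q 1 \<noteq> qpw q (- of_nat j)"
    and "\<forall>j::nat. \<gamma> * qpw q 2 \<noteq> qpw q (- of_nat j)"
    and "\<forall>j::nat. \<gamma> * qpw q 3 \<noteq> qpw q (- of_nat j)"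
  defines "E \<equiv> \<lambda>x::complex.
      phi43 (qpw q (- (2 * of_nat n + 1))) (qpw q (- 2 * (of_nat N - of_nat n))) (qpw q (- x))
            (- \<gamma> * qpw q (x + 1))
            (qpw q (- of_nat N)) (- qpw q (- of_nat N)) (\<gamma> * qpw q 1) (qpw q 1)
    = (qpw q (- x) - \<gamma> * qpw q (x + 1)) / (1 - \<gamma> * qpw q 1) *
      phi43 (qpw q (- 2 * of_nat n)) (qpw q (2 * of_nat n - 2 * of_nat N + 1)) (qpw q (- 2 * x))
            (\<gamma>\<^sup>2 * qpw q (2 * x + 2))
            (qpw q (- 2 * of_nat N)) (\<gamma> * qpw q 2) (\<gamma> * qpw q 3) (qpw q 2)"
  shows "(2 * n + 1 \<le> N \<longrightarrow> (\<forall>x::complex. E x))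
       \<and> (2 * n + 1 > N \<longrightarrow> (\<forall>x\<in>{0..N}. E (of_nat x)))"
proof -
  have "E x" if "2*n+1 \<le> N \<or> (\<exists>m\<le>N. x = of_nat m)" for x
    unfolding E_def using assms(1,2,4,5) that by (rule quadratic_transformation_real_base)
  then show ?thesis
    by auto
qed

end
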